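(* Let $\vartheta$ be a primitive semi-compatible random substitution. Then for all $1\leqslant i\leqslant n$, \[ \frac{1}{\lambda}\bm q_1^\intercal\bm R\;\leqslant\;\underline s_i^I\;\leqslant\;\overline s_i^I\;\leqslant\;\frac{1}{\lambda-1}\bm q_1^\intercal\bm R . \] The lower bound is an equality if the identical set condition holds, and the upper bound is an equality if the disjoint set condition holds. Moreover, $\frac{1}{\lambda^r}\bm q_r^\intercal\bm R\leqslant\underline s_i^I$ for every $r\in\mathbb N$, and $r\mapsto\frac{1}{\lambda^r}\bm q_r^\intercal\bm R$ is monotonically non-decreasing.
   Context: Let $\mathcal A=\{a_1,\dots,a_n\}$ be a finite alphabet, $\mathcal A^+$ the finite non-empty words over $\mathcal A$. A random substitution is a map $\vartheta$ from $\mathcal A$ to finite non-empty subsets of $\mathcal A^+$, extended to words by $\vartheta(u_1\cdots u_m)=\{w_1\cdots w_m: w_k\in\vartheta(u_k)\}$ and to sets of words by taking unions; powers $\vartheta^m$ are compositions. $|u|_a$ is the number of occurrences of letter $a$ in $u$, $\Phi(u)=(|u|_{a_1},\dots,|u|_{a_n})^\intercal$. $\vartheta$ is semi-compatible if for each $a$ all words in $\vartheta(a)$ have the same $\Phi$; then all words in $\vartheta^m(a_i)$ have a common length $\ell_{m,i}$. The substitution matrix is $M_{ij}=|u|_{a_i}$, $u\in\vartheta(a_j)$; $\vartheta$ is primitive if $M$ is a primitive matrix, $\lambda$ denotes its Perron–Frobenius eigenvalue and $\bm R,\bm L$ its right and left PF eigenvectors normalised by $\|\bm R\|_1=1=\bm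 L^\intercal\bm R$. Set $q_{m,i}=\log(\#\vartheta^m(a_i))$, $\bm q_m=(q_{m,1},\dots,q_{m,n})^\intercal$. The lower and upper inflation word entropies of type $i$ are $\underline s_i^I=\liminf_{m\to\infty} q_{m,i}/\ell_{m,i}$ and $\overline s_i^I=\limsup_{m\to\infty}q_{m,i}/\ell_{m,i}$. Identical set condition: for all $i$, $m\in\mathbb N$, $u,v\in\vartheta(a_i)$: $\vartheta^m(u)=\vartheta^m(v)$. Disjoint set condition: for all $i$, $m\in\mathbb N$, $u\neq v\in\vartheta(a_i)$: $\vartheta^m(u)\cap\vartheta^m(v)=\varnothing$. *)

theory Defs
  imports Complex_Main "HOL-Library.Liminf_Limsup" "HOL-Library.Extended_Real"
begin

definition random_subst :: "('a \<Rightarrow> 'a list set) \<Rightarrow> bool" where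
  "random_subst \<theta> \<longleftrightarrow> (\<forall>a. finite (\<theta> a) \<and> \<theta> a \<noteq> {} \<and> (\<forall>w\<in>\<theta> a. w \<noteq> []))"

fun subst_word :: "('a \<Rightarrow> 'a list set) \<Rightarrow> 'a list \<Rightarrow> 'a list set" where
  "subst_word \<theta> [] = {[]}"
| "subst_word \<theta> (a # u) = {w @ v | w v. w \<in> \<theta> a \<and> v \<in> subst_word \<theta> u}"

definition subst_set :: "('a \<Rightarrow> 'a list set) \<Rightarrow> 'a list set \<Rightarrow> 'a list set" where
  "subst_set \<theta> S = (\<Union>u\<in>S. subst_word \<theta> u)"

definition subst_pow_word :: "('a \<Rightarrow> 'a list set) \<Rightarrow> nat \<Rightarrow> 'a list \<Rightarrow> 'a list set" where
  "subst_pow_word \<theta> m u = (subst_set \<theta> ^^ m) {u}"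

definition subst_pow :: "('a \<Rightarrow> 'a list set) \<Rightarrow> nat \<Rightarrow> 'a \<Rightarrow> 'a list set" where
  "subst_pow \<theta> m a = subst_pow_word \<theta> m [a]"

definition semi_compatible :: "('a \<Rightarrow> 'a list set) \<Rightarrow> bool" where
  "semi_compatible \<theta> \<longleftrightarrow>
     (\<forall>a. \<forall>u\<in>\<theta> a. \<forall>v\<in>\<theta> a. \<forall>b. count_list u b = count_list v b)"

definition subst_matrix :: "('a \<Rightarrow> 'a list set) \<Rightarrow> 'a \<Rightarrow> 'a \<Rightarrow> real" where
  "subst_matrix \<theta> i j = real (count_list (SOME u. u \<in> \<theta> j) i)"

fun mat_pow :: "('a::finite \<Rightarrow> 'a \<Rightarrow> real) \<Rightarrow> nat \<Rightarrow> 'a \<Rightarrow> 'a \<Rightarrow> real" where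
  "mat_pow M 0 = (\<lambda>i j. if i = j then 1 else 0)"
| "mat_pow M (Suc k) = (\<lambda>i j. \<Sum>l\<in>UNIV. mat_pow M k i l * M l j)"

definition primitive_matrix :: "('a::finite \<Rightarrow> 'a \<Rightarrow> real) \<Rightarrow> bool" where
  "primitive_matrix M \<longleftrightarrow> (\<forall>i j. M i j \<ge> 0) \<and> (\<exists>k\<ge>1. \<forall>i j. mat_pow M k i j > 0)"

definition primitive_subst :: "('a::finite \<Rightarrow> 'a list set) \<Rightarrow> bool" where
  "primitive_subst \<theta> \<longleftrightarrow> primitive_matrix (subst_matrix \<theta>)"

text \<open>lambda is the Perron-Frobenius eigenvalue and R the right PF eigenvector,
  normalised with ||R||_1 = 1. For a primitive matrix these are uniquely
  determined by: R strictly positive, M R = lambda R, sum R = 1.\<close>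
definition PF_right :: "('a::finite \<Rightarrow> 'a \<Rightarrow> real) \<Rightarrow> real \<Rightarrow> ('a \<Rightarrow> real) \<Rightarrow> bool" where
  "PF_right M lam R \<longleftrightarrow> (\<forall>i. R i > 0) \<and> (\<forall>i. (\<Sum>j\<in>UNIV. M i j * R j) = lam * R i)
      \<and> (\<Sum>i\<in>UNIV. R i) = 1"

definition ell :: "('a \<Rightarrow> 'a list set) \<Rightarrow> nat \<Rightarrow> 'a \<Rightarrow> nat" where
  "ell \<theta> m a = length (SOME w. w \<in> subst_pow \<theta> m a)"

definition qv :: "('a \<Rightarrow> 'a list set) \<Rightarrow> nat \<Rightarrow> 'a \<Rightarrow> real" where
  "qv \<theta> m a = ln (real (card (subst_pow \<theta> m a)))"

definition lower_infl_entropy :: "('a \<Rightarrow> 'a list set) \<Rightarrow> 'a \<Rightarrow> ereal" where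
  "lower_infl_entropy \<theta> a = liminf (\<lambda>m. ereal (qv \<theta> m a / real (ell \<theta> m a)))"

definition upper_infl_entropy :: "('a \<Rightarrow> 'a list set) \<Rightarrow> 'a \<Rightarrow> ereal" where
  "upper_infl_entropy \<theta> a = limsup (\<lambda>m. ereal (qv \<theta> m a / real (ell \<theta> m a)))"

definition identical_set_condition :: "('a \<Rightarrow> 'a list set) \<Rightarrow> bool" where
  "identical_set_condition \<theta> \<longleftrightarrow>
     (\<forall>a m. m \<ge> 1 \<longrightarrow> (\<forall>u\<in>\<theta> a. \<forall>v\<in>\<theta> a. subst_pow_word \<theta> m u = subst_pow_word \<theta> m v))"

definition disjoint_set_condition :: "('a \<Rightarrow> 'a list set) \<Rightarrow> bool" where
  "disjoint_set_condition \<theta> \<longleftrightarrow>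
     (\<forall>a m. m \<ge> 1 \<longrightarrow> (\<forall>u\<in>\<theta> a. \<forall>v\<in>\<theta> a. u \<noteq> v \<longrightarrow>
         subst_pow_word \<theta> m u \<inter> subst_pow_word \<theta> m v = {}))"

end

theory Submission
  imports Defs
begin

text \<open>Let \<open>q m a = ln #\<theta>^m(a)\<close>. The set \<open>\<theta>^(m+1)(a)\<close> is the union of the sets \<open>\<theta>^m(v)\<close>
  over \<open>v \<in> \<theta>(a)\<close>, and by semi-compatibility each \<open>\<theta>^m(v)\<close> is the product of the sets
  \<open>\<theta>^m(b)\<close> over the letters \<open>b\<close> of \<open>v\<close>. Hence \<open>M^T q m \<le> q (m+1) \<le> q 1 + M^T q m\<close>, with
  equality on the left under the identical and on the right under the disjoint set condition.
  Pairing with the eigenvector \<open>R\<close> shows that \<open>q r \<cdot> R / \<lambda>^r\<close> increases, and iterating gives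
  \<open>(M^T)^t q r \<le> q (r+t)\<close> and \<open>q m \<le> \<Sum>s<m. (M^T)^s q 1\<close>; the lengths \<open>\<ell> m\<close> are the column
  sums of \<open>M^m\<close>. Primitivity makes \<open>(M^t)_ci / (\<lambda>^t R_c)\<close> converge to a positive limit
  independent of \<open>c\<close>: the matrices \<open>(M^k)_cl R_l / (\<lambda>^k R_c)\<close> are stochastic, and for \<open>k\<close> with
  \<open>M^k > 0\<close> they shrink the oscillation by a fixed factor. So after division by \<open>\<ell> m\<close> the lower
  bound tends to \<open>q r \<cdot> R / \<lambda>^r\<close> and the upper bound, a geometric average, to
  \<open>q 1 \<cdot> R / (\<lambda> - 1)\<close>.\<close>

section \<open>Limits of real sequences\<close>

lemma contraction_tendsto_zero:
  fixes e d :: "nat \<Rightarrow> real"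
  assumes "0 \<le> \<rho>" "\<rho> < 1" "\<And>m. \<bar>e (Suc m)\<bar> \<le> \<rho> * \<bar>e m\<bar> + \<bar>d m\<bar>" "d \<longlonglongrightarrow> 0"
  shows "e \<longlonglongrightarrow> 0"
proof (rule LIMSEQ_I)
  fix r :: real assume r: "r > 0"
  define \<delta> where "\<delta> = r * (1 - \<rho>) / 2"
  have \<delta>: "\<delta> > 0" using r assms(2) by (simp add: \<delta>_def)
  obtain N where N: "\<And>n. n \<ge> N \<Longrightarrow> \<bar>d n\<bar> < \<delta>"
    using LIMSEQ_D[OF assms(4) \<delta>] by auto
  have bound: "\<bar>e (N + j)\<bar> \<le> \<rho> ^ j * \<bar>e N\<bar> + r / 2" for j
  proof (induction j)
    case 0 then show ?case using r by simp
  next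
    case (Suc j)
    have "\<bar>e (N + Suc j)\<bar> \<le> \<rho> * \<bar>e (N + j)\<bar> + \<bar>d (N + j)\<bar>"
      using assms(3)[of "N + j"] by simp
    also have "\<dots> \<le> \<rho> * (\<rho> ^ j * \<bar>e N\<bar> + r / 2) + \<delta>"
      using Suc N[of "N + j"] assms(1) by (intro add_mono mult_left_mono) auto
    also have "\<dots> = \<rho> ^ Suc j * \<bar>e N\<bar> + r / 2"
      unfolding \<delta>_def by (simp add: field_simps)
    finally show ?case .
  qed
  have "(\<lambda>j. \<rho> ^ j * \<bar>e N\<bar>) \<longlonglongrightarrow> 0"
    using LIMSEQ_power_zero[of \<rho>] assms(1,2) by (intro tendsto_mult_left_zero) auto
  from LIMSEQ_D[OF this, of "r / 2"] r
  obtain J where J: "\<And>j. j \<ge> J \<Longrightarrow> \<bar>\<rho> ^ j * \<bar>e N\<bar>\<bar> < r / 2"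
    by auto
  show "\<exists>no. \<forall>n\<ge>no. norm (e n - 0) < r"
  proof (intro exI allI impI)
    fix n assume n: "n \<ge> N + J"
    then have "J \<le> n - N" by simp
    have "\<bar>e n\<bar> = \<bar>e (N + (n - N))\<bar>" using n by simp
    also have "\<dots> \<le> \<rho> ^ (n - N) * \<bar>e N\<bar> + r / 2" by (rule bound)
    also have "\<dots> < r" using J[OF \<open>J \<le> n - N\<close>] by simp
    finally show "norm (e n - 0) < r" by simp
  qed
qed

lemma tendsto_geometric_average:
  fixes z :: "nat \<Rightarrow> real"
  assumes z: "z \<longlonglongrightarrow> L" and lam: "lam > 1"
  shows "(\<lambda>m. (\<Sum>s<m. z s * lam ^ s) / lam ^ m) \<longlonglongrightarrow> L / (lam - 1)"
proof -
  define e where "e m = (\<Sum>s<m. z s * lam ^ s) / lam ^ m - L / (lam - 1)" for m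
  have e_Suc: "e (Suc m) = e m / lam + (z m - L) / lam" for m
    unfolding e_def using lam by (simp add: field_simps)
  have "e \<longlonglongrightarrow> 0"
  proof (rule contraction_tendsto_zero)
    show "0 \<le> 1 / lam" "1 / lam < 1" using lam by auto
    show "\<bar>e (Suc m)\<bar> \<le> 1 / lam * \<bar>e m\<bar> + \<bar>(z m - L) / lam\<bar>" for m
      unfolding e_Suc using lam abs_triangle_ineq[of "e m / lam" "(z m - L) / lam"]
      by (simp add: abs_divide)
    have "(\<lambda>m. z m - L) \<longlonglongrightarrow> 0" using z by (simp add: LIMSEQ_iff)
    then show "(\<lambda>m. (z m - L) / lam) \<longlonglongrightarrow> 0" by (intro tendsto_divide_zero)
  qed
  then have "(\<lambda>m. e m + L / (lam - 1)) \<longlonglongrightarrow> 0 + L / (lam - 1)" by (intro tendsto_add) auto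
  then show ?thesis by (simp add: e_def)
qed

lemma tendsto_quotient_of_scaled:
  fixes f g s :: "nat \<Rightarrow> real"
  assumes "(\<lambda>t. f t / s t) \<longlonglongrightarrow> a" "(\<lambda>t. g t / s t) \<longlonglongrightarrow> b" "b \<noteq> 0" "\<And>t. s t \<noteq> 0"
  shows "(\<lambda>t. f t / g t) \<longlonglongrightarrow> a / b"
proof -
  have "(\<lambda>t. (f t / s t) / (g t / s t)) \<longlonglongrightarrow> a / b"
    using assms(1-3) by (rule tendsto_divide)
  moreover have "(f t / s t) / (g t / s t) = f t / g t" for t
    using assms(4)[of t] by (cases "g t = 0") simp_all
  ultimately show ?thesis by (simp only:)
qed

lemma le_Liminf_of_tendsto:
  fixes f g :: "nat \<Rightarrow> real"
  assumes "g \<longlonglongrightarrow> L" and "eventually (\<lambda>m. g m \<le> f m) sequentially"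
  shows "ereal L \<le> liminf (\<lambda>m. ereal (f m))"
proof -
  have "liminf (\<lambda>m. ereal (g m)) = ereal L"
    using assms(1) by (intro lim_imp_Liminf tendsto_ereal) simp_all
  moreover have "liminf (\<lambda>m. ereal (g m)) \<le> liminf (\<lambda>m. ereal (f m))"
    using assms(2) by (intro Liminf_mono) (simp add: eventually_mono)
  ultimately show ?thesis by simp
qed

lemma Limsup_le_of_tendsto:
  fixes f g :: "nat \<Rightarrow> real"
  assumes "g \<longlonglongrightarrow> L" and "eventually (\<lambda>m. f m \<le> g m) sequentially"
  shows "limsup (\<lambda>m. ereal (f m)) \<le> ereal L"
proof -
  have "limsup (\<lambda>m. ereal (g m)) = ereal L"
    using assms(1) by (intro lim_imp_Limsup tendsto_ereal) simp_all
  moreover have "limsup (\<lambda>m. ereal (f m)) \<le> limsup (\<lambda>m. ereal (g m))"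
    using assms(2) by (intro Limsup_mono) (simp add: eventually_mono)
  ultimately show ?thesis by simp
qed

section \<open>Powers of a primitive matrix\<close>

lemma weighted_average_ge:
  fixes W y :: "'a::finite \<Rightarrow> real"
  assumes "\<And>l. 0 \<le> W l" "(\<Sum>l\<in>UNIV. W l) = 1" "\<And>l. b \<le> y l"
  shows "b \<le> (\<Sum>l\<in>UNIV. W l * y l)"
proof -
  have "(\<Sum>l\<in>UNIV. W l * b) \<le> (\<Sum>l\<in>UNIV. W l * y l)"
    using assms by (intro sum_mono mult_left_mono) auto
  then show ?thesis by (simp add: sum_distrib_right[symmetric] assms(2))
qed

lemma weighted_average_le:
  fixes W y :: "'a::finite \<Rightarrow> real"
  assumes "\<And>l. 0 \<le> W l" "(\<Sum>l\<in>UNIV. W l) = 1" "\<And>l. y l \<le> b"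
  shows "(\<Sum>l\<in>UNIV. W l * y l) \<le> b"
proof -
  have "(\<Sum>l\<in>UNIV. W l * y l) \<le> (\<Sum>l\<in>UNIV. W l * b)"
    using assms by (intro sum_mono mult_left_mono) auto
  then show ?thesis by (simp add: sum_distrib_right[symmetric] assms(2))
qed

lemma weighted_average_le_contract:
  fixes W y :: "'a::finite \<Rightarrow> real"
  assumes "\<And>l. \<epsilon> \<le> W l" "0 \<le> \<epsilon>" "(\<Sum>l\<in>UNIV. W l) = 1" "\<And>l. y l \<le> b"
  shows "(\<Sum>l\<in>UNIV. W l * y l) \<le> \<epsilon> * y l\<^sub>0 + (1 - \<epsilon>) * b"
proof -
  have W_nonneg: "0 \<le> W l" for l
    using assms(1,2) order_trans by blast
  have "\<epsilon> * (b - y l\<^sub>0) \<le> W l\<^sub>0 * (b - y l\<^sub>0)"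
    using assms by (intro mult_right_mono) auto
  also have "\<dots> \<le> (\<Sum>l\<in>UNIV. W l * (b - y l))"
    by (rule member_le_sum) (use W_nonneg assms(4) in \<open>auto intro: mult_nonneg_nonneg\<close>)
  also have "\<dots> = b - (\<Sum>l\<in>UNIV. W l * y l)"
    by (simp add: right_diff_distrib sum_subtractf sum_distrib_right[symmetric] assms(3))
  finally show ?thesis by (simp add: algebra_simps)
qed

lemma sum_mult_delta [simp]:
  fixes f :: "'a::finite \<Rightarrow> real"
  shows "(\<Sum>l\<in>UNIV. f l * (if l = j then 1 else 0)) = f j"
    and "(\<Sum>l\<in>UNIV. f l * (if j = l then 1 else 0)) = f j"
    and "(\<Sum>l\<in>UNIV. (if l = j then 1 else 0) * f l) = f j"
    and "(\<Sum>l\<in>UNIV. (if j = l then 1 else 0) * f l) = f j"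
  by (simp_all add: if_distrib [of "(*) _"] if_distrib [of "\<lambda>x. x * _"] cong: if_cong)

lemma mat_pow_add: "mat_pow M (a + b) i j = (\<Sum>l\<in>UNIV. mat_pow M a i l * mat_pow M b l j)"
proof (induction b arbitrary: j)
  case 0 then show ?case by simp
next
  case (Suc b)
  have "mat_pow M (a + Suc b) i j = (\<Sum>m\<in>UNIV. mat_pow M (a + b) i m * M m j)"
    by simp
  also have "\<dots> = (\<Sum>m\<in>UNIV. \<Sum>l\<in>UNIV. mat_pow M a i l * (mat_pow M b l m * M m j))"
    unfolding Suc sum_distrib_right by (simp add: mult_ac)
  also have "\<dots> = (\<Sum>l\<in>UNIV. \<Sum>m\<in>UNIV. mat_pow M a i l * (mat_pow M b l m * M m j))"
    by (rule sum.swap)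
  also have "\<dots> = (\<Sum>l\<in>UNIV. mat_pow M a i l * mat_pow M (Suc b) l j)"
    by (simp add: sum_distrib_left)
  finally show ?case .
qed

lemma mat_pow_nonneg:
  assumes "\<And>i j. 0 \<le> M i j"
  shows "0 \<le> mat_pow M k i j"
  by (induction k arbitrary: i j) (auto intro!: sum_nonneg mult_nonneg_nonneg assms)

lemma mat_pow_eigenvector:
  assumes "\<And>i. (\<Sum>j\<in>UNIV. M i j * R j) = lam * R i"
  shows "(\<Sum>l\<in>UNIV. mat_pow M k i l * R l) = lam ^ k * R i"
proof (induction k arbitrary: i)
  case 0 then show ?case by simp
next
  case (Suc k)
  have "(\<Sum>l\<in>UNIV. mat_pow M (Suc k) i l * R l)
      = (\<Sum>l\<in>UNIV. \<Sum>m\<in>UNIV. mat_pow M k i m * (M m l * R l))"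
    unfolding mat_pow.simps sum_distrib_right by (simp add: mult_ac)
  also have "\<dots> = (\<Sum>m\<in>UNIV. \<Sum>l\<in>UNIV. mat_pow M k i m * (M m l * R l))"
    by (rule sum.swap)
  also have "\<dots> = (\<Sum>m\<in>UNIV. mat_pow M k i m * (lam * R m))"
    by (simp add: sum_distrib_left[symmetric] assms)
  also have "\<dots> = lam * (\<Sum>m\<in>UNIV. mat_pow M k i m * R m)"
    by (simp add: sum_distrib_left mult_ac)
  finally show ?case by (simp add: Suc)
qed

lemma vec_mat_pow_Suc:
  "(\<Sum>c\<in>UNIV. M c a * (\<Sum>d\<in>UNIV. f d * mat_pow M t d c)) = (\<Sum>d\<in>UNIV. f d * mat_pow M (Suc t) d a)"
proof -
  have "(\<Sum>c\<in>UNIV. M c a * (\<Sum>d\<in>UNIV. f d * mat_pow M t d c))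
      = (\<Sum>c\<in>UNIV. \<Sum>d\<in>UNIV. f d * (mat_pow M t d c * M c a))"
    by (simp add: sum_distrib_left mult_ac)
  also have "\<dots> = (\<Sum>d\<in>UNIV. \<Sum>c\<in>UNIV. f d * (mat_pow M t d c * M c a))"
    by (rule sum.swap)
  also have "\<dots> = (\<Sum>d\<in>UNIV. f d * mat_pow M (Suc t) d a)"
    by (simp add: sum_distrib_left)
  finally show ?thesis .
qed

locale perron_frobenius =
  fixes M :: "'a::finite \<Rightarrow> 'a \<Rightarrow> real" and lam :: real and R :: "'a \<Rightarrow> real"
  assumes primitive: "primitive_matrix M" and eigenvector: "PF_right M lam R"
begin

lemma nonneg: "0 \<le> M i j"
  using primitive by (simp add: primitive_matrix_def)

lemma positive_power: "\<exists>k\<ge>1. \<forall>i j. 0 < mat_pow M k i j"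
  using primitive by (simp add: primitive_matrix_def)

lemma R_pos: "0 < R i"
  using eigenvector by (simp add: PF_right_def)

lemma R_nonzero [simp]: "R i \<noteq> 0"
  using R_pos[of i] by simp

lemma R_eigen: "(\<Sum>j\<in>UNIV. M i j * R j) = lam * R i"
  using eigenvector by (simp add: PF_right_def)

lemma R_sum: "(\<Sum>i\<in>UNIV. R i) = 1"
  using eigenvector by (simp add: PF_right_def)

lemma mat_pow_R: "(\<Sum>l\<in>UNIV. mat_pow M k i l * R l) = lam ^ k * R i"
  using mat_pow_eigenvector[OF R_eigen] .

lemma eigenvalue_pos: "0 < lam"
proof -
  obtain k where k: "1 \<le> k" "\<And>i j. 0 < mat_pow M k i j"
    using positive_power by blast
  fix i :: 'a
  have "0 \<le> lam * R i"
    unfolding R_eigen[symmetric] using nonneg R_pos by (intro sum_nonneg mult_nonneg_nonneg) (auto intro: less_imp_le)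
  then have "0 \<le> lam" using R_pos[of i] by (simp add: zero_le_mult_iff)
  have "0 < lam ^ k * R i"
    unfolding mat_pow_R[symmetric] using k(2) R_pos by (intro sum_pos mult_pos_pos) auto
  then have "lam \<noteq> 0" using k(1) by (cases k) auto
  with \<open>0 \<le> lam\<close> show ?thesis by simp
qed

lemma eigenvalue_nonzero [simp]: "lam \<noteq> 0"
  using eigenvalue_pos by simp

definition weight :: "nat \<Rightarrow> 'a \<Rightarrow> 'a \<Rightarrow> real" where
  "weight k c l = mat_pow M k c l * R l / (lam ^ k * R c)"

definition ratio :: "'a \<Rightarrow> nat \<Rightarrow> 'a \<Rightarrow> real" where
  "ratio i t c = mat_pow M t c i / (lam ^ t * R c)"

lemma weight_nonneg: "0 \<le> weight k c l"
  unfolding weight_def using mat_pow_nonneg[OF nonneg] R_pos eigenvalue_pos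
  by (intro divide_nonneg_pos mult_nonneg_nonneg) (auto intro: less_imp_le)

lemma weight_sum: "(\<Sum>l\<in>UNIV. weight k c l) = 1"
  using mat_pow_R[of k c] R_pos[of c] eigenvalue_pos
  by (simp add: weight_def flip: sum_divide_distrib)

lemma ratio_add: "ratio i (k + t) c = (\<Sum>l\<in>UNIV. weight k c l * ratio i t l)"
proof -
  have "ratio i (k + t) c = (\<Sum>l\<in>UNIV. mat_pow M k c l * mat_pow M t l i / (lam ^ (k + t) * R c))"
    unfolding ratio_def mat_pow_add sum_divide_distrib ..
  also have "\<dots> = (\<Sum>l\<in>UNIV. weight k c l * ratio i t l)"
    using eigenvalue_pos
    by (intro sum.cong) (simp_all add: weight_def ratio_def power_add field_simps)
  finally show ?thesis .
qed

definition ratio_max :: "'a \<Rightarrow> nat \<Rightarrow> real" where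
  "ratio_max i t = Max (range (ratio i t))"

definition ratio_min :: "'a \<Rightarrow> nat \<Rightarrow> real" where
  "ratio_min i t = Min (range (ratio i t))"

lemma ratio_min_le: "ratio_min i t \<le> ratio i t c"
  unfolding ratio_min_def by simp

lemma ratio_le_max: "ratio i t c \<le> ratio_max i t"
  unfolding ratio_max_def by simp

lemma ratio_min_attained: obtains l where "ratio i t l = ratio_min i t"
  unfolding ratio_min_def
  by (metis Min_in finite_UNIV finite_imageI rangeE UNIV_not_empty image_is_empty)

lemma ratio_max_add_le: "ratio_max i (k + t) \<le> ratio_max i t"
  using weighted_average_le[OF weight_nonneg weight_sum ratio_le_max]
  by (simp add: ratio_max_def[of i "k + t"] ratio_add)

lemma ratio_min_add_ge: "ratio_min i t \<le> ratio_min i (k + t)"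
  using weighted_average_ge[OF weight_nonneg weight_sum ratio_min_le]
  by (simp add: ratio_min_def[of i "k + t"] ratio_add)

lemma oscillation_contracts:
  obtains k \<epsilon> where "0 < \<epsilon>" "\<And>i. 0 < ratio_min i k"
    "\<And>i t. ratio_max i (k + t) - ratio_min i (k + t) \<le> (1 - \<epsilon>) * (ratio_max i t - ratio_min i t)"
proof -
  obtain k where k: "\<And>i j. 0 < mat_pow M k i j"
    using positive_power by blast
  define \<epsilon> where "\<epsilon> = Min (range (\<lambda>(c, l). weight k c l))"
  have weight_pos: "0 < weight k c l" for c l
    unfolding weight_def using k R_pos eigenvalue_pos by simp
  have \<epsilon>_le: "\<epsilon> \<le> weight k c l" for c l
    unfolding \<epsilon>_def by (rule Min_le) (auto intro: range_eqI[of _ _ "(c, l)"])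
  have "\<epsilon> \<in> range (\<lambda>(c, l). weight k c l)"
    unfolding \<epsilon>_def by (rule Min_in) auto
  then have \<epsilon>: "0 < \<epsilon>" using weight_pos by auto
  have "0 < ratio_min i k" for i
    unfolding ratio_min_def ratio_def using k R_pos eigenvalue_pos by simp
  moreover have "ratio_max i (k + t) - ratio_min i (k + t) \<le> (1 - \<epsilon>) * (ratio_max i t - ratio_min i t)"
    for i t
  proof -
    obtain l\<^sub>0 where l\<^sub>0: "ratio i t l\<^sub>0 = ratio_min i t" by (rule ratio_min_attained)
    have "ratio i (k + t) c \<le> \<epsilon> * ratio_min i t + (1 - \<epsilon>) * ratio_max i t" for c
      unfolding ratio_add l\<^sub>0[symmetric] using \<epsilon>
      by (intro weighted_average_le_contract \<epsilon>_le weight_sum ratio_le_max) auto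
    then have "ratio_max i (k + t) \<le> \<epsilon> * ratio_min i t + (1 - \<epsilon>) * ratio_max i t"
      by (simp add: ratio_max_def[of i "k + t"])
    with ratio_min_add_ge[of i t k] show ?thesis by (simp add: algebra_simps)
  qed
  ultimately show ?thesis using that \<epsilon> by blast
qed

lemma ratio_min_max_tendsto:
  obtains \<gamma> where "0 < \<gamma>" "ratio_min i \<longlonglongrightarrow> \<gamma>" "ratio_max i \<longlonglongrightarrow> \<gamma>"
proof -
  obtain k \<epsilon> where \<epsilon>: "0 < \<epsilon>" and pos: "0 < ratio_min i k"
    and contract: "\<And>t. ratio_max i (k + t) - ratio_min i (k + t) \<le> (1 - \<epsilon>) * (ratio_max i t - ratio_min i t)"
    using oscillation_contracts by metis
  have inc: "incseq (ratio_min i)"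
    by (rule incseq_SucI) (metis ratio_min_add_ge plus_1_eq_Suc)
  have dec: "decseq (ratio_max i)"
    by (rule decseq_SucI) (metis ratio_max_add_le plus_1_eq_Suc)
  have min_le_max: "ratio_min i t \<le> ratio_max i s" for t s
  proof -
    have "ratio_min i t \<le> ratio_min i (max t s)" using inc by (simp add: incseq_def)
    also have "\<dots> \<le> ratio_max i (max t s)" by (meson ratio_min_le ratio_le_max order_trans)
    also have "\<dots> \<le> ratio_max i s" using dec by (simp add: decseq_def)
    finally show ?thesis .
  qed
  define A where "A = (SUP t. ratio_min i t)"
  define B where "B = (INF t. ratio_max i t)"
  have A: "ratio_min i \<longlonglongrightarrow> A"
    unfolding A_def using min_le_max by (intro LIMSEQ_incseq_SUP inc bdd_aboveI2) auto
  have B: "ratio_max i \<longlonglongrightarrow> B"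
    unfolding B_def using min_le_max by (intro LIMSEQ_decseq_INF dec bdd_belowI2) auto
  have "A \<le> B" using min_le_max by (intro LIMSEQ_le[OF A B]) auto
  have osc: "(\<lambda>t. ratio_max i t - ratio_min i t) \<longlonglongrightarrow> B - A"
    using A B by (intro tendsto_diff)
  have "B - A \<le> (1 - \<epsilon>) * (B - A)"
  proof (rule LIMSEQ_le)
    show "(\<lambda>t. ratio_max i (t + k) - ratio_min i (t + k)) \<longlonglongrightarrow> B - A"
      using LIMSEQ_ignore_initial_segment[OF osc] .
    show "(\<lambda>t. (1 - \<epsilon>) * (ratio_max i t - ratio_min i t)) \<longlonglongrightarrow> (1 - \<epsilon>) * (B - A)"
      using osc by (intro tendsto_mult_left)
  qed (use contract in \<open>auto simp: add.commute\<close>)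
  with \<open>A \<le> B\<close> \<epsilon> have "A = B" by (simp add: algebra_simps mult_le_0_iff)
  moreover have "0 < A" using pos incseq_le[OF inc A, of k] by simp
  ultimately show ?thesis using that A B by blast
qed

lemma ratio_tendsto:
  obtains \<gamma> where "0 < \<gamma>" "\<And>c. (\<lambda>t. ratio i t c) \<longlonglongrightarrow> \<gamma>"
proof -
  obtain \<gamma> where \<gamma>: "0 < \<gamma>" and min: "ratio_min i \<longlonglongrightarrow> \<gamma>" and max: "ratio_max i \<longlonglongrightarrow> \<gamma>"
    using ratio_min_max_tendsto[of i] by blast
  have "(\<lambda>t. ratio i t c) \<longlonglongrightarrow> \<gamma>" for c
    by (rule tendsto_sandwich[OF _ _ min max]) (simp_all add: ratio_min_le ratio_le_max)
  with \<gamma> show ?thesis by (rule that)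
qed

lemma mat_pow_column_tendsto:
  obtains \<gamma> where "0 < \<gamma>"
    "\<And>v. (\<lambda>t. (\<Sum>c\<in>UNIV. v c * mat_pow M t c i) / lam ^ t) \<longlonglongrightarrow> \<gamma> * (\<Sum>c\<in>UNIV. v c * R c)"
proof -
  obtain \<gamma> where \<gamma>: "0 < \<gamma>" "\<And>c. (\<lambda>t. ratio i t c) \<longlonglongrightarrow> \<gamma>"
    using ratio_tendsto[of i] by blast
  have "(\<lambda>t. (\<Sum>c\<in>UNIV. v c * mat_pow M t c i) / lam ^ t) \<longlonglongrightarrow> \<gamma> * (\<Sum>c\<in>UNIV. v c * R c)" for v
  proof -
    have "(\<Sum>c\<in>UNIV. v c * mat_pow M t c i) / lam ^ t = (\<Sum>c\<in>UNIV. v c * R c * ratio i t c)" for t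
      unfolding sum_divide_distrib using R_pos eigenvalue_pos
      by (intro sum.cong) (simp_all add: ratio_def field_simps)
    moreover have "(\<lambda>t. \<Sum>c\<in>UNIV. v c * R c * ratio i t c) \<longlonglongrightarrow> (\<Sum>c\<in>UNIV. v c * R c * \<gamma>)"
      by (intro tendsto_sum tendsto_mult_left \<gamma>(2))
    ultimately show ?thesis by (simp add: sum_distrib_left mult_ac)
  qed
  with \<gamma>(1) show ?thesis by (rule that)
qed

end

section \<open>Random substitutions\<close>

definition conc :: "'a list set \<Rightarrow> 'a list set \<Rightarrow> 'a list set" where
  "conc A B = {x @ y | x y. x \<in> A \<and> y \<in> B}"

lemma conc_eq_image: "conc A B = (\<lambda>(x, y). x @ y) ` (A \<times> B)"
  by (auto simp: conc_def)

lemma finite_conc: "finite A \<Longrightarrow> finite B \<Longrightarrow> finite (conc A B)"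
  by (simp add: conc_eq_image)

lemma card_conc:
  assumes "finite A" "finite B" "\<And>x x'. x \<in> A \<Longrightarrow> x' \<in> A \<Longrightarrow> length x = length x'"
  shows "card (conc A B) = card A * card B"
proof -
  have "inj_on (\<lambda>(x, y). x @ y) (A \<times> B)"
  proof (rule inj_onI, clarsimp)
    fix x y x' y' assume "x \<in> A" "x' \<in> A" "x @ y = x' @ y'"
    moreover have "length x = length x'" using assms(3) \<open>x \<in> A\<close> \<open>x' \<in> A\<close> .
    ultimately show "x = x' \<and> y = y'" by simp
  qed
  then show ?thesis unfolding conc_eq_image by (simp add: card_image card_cartesian_product)
qed

lemma subst_word_Cons: "subst_word \<theta> (a # u) = conc (\<theta> a) (subst_word \<theta> u)"
  by (simp add: conc_def)

lemma subst_word_append: "subst_word \<theta> (u @ v) = conc (subst_word \<theta> u) (subst_word \<theta> v)"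
proof (induction u)
  case Nil then show ?case by (auto simp: conc_def)
next
  case (Cons a u)
  show ?case
    unfolding append_Cons subst_word_Cons Cons by (auto simp: conc_def) (metis append.assoc)+
qed

lemma subst_set_conc: "subst_set \<theta> (conc A B) = conc (subst_set \<theta> A) (subst_set \<theta> B)"
proof (intro equalityI subsetI)
  fix w assume "w \<in> subst_set \<theta> (conc A B)"
  then show "w \<in> conc (subst_set \<theta> A) (subst_set \<theta> B)"
    by (auto simp: subst_set_def conc_def subst_word_append) blast
next
  fix w assume "w \<in> conc (subst_set \<theta> A) (subst_set \<theta> B)"
  then obtain x y x' y' where "w = x' @ y'" "x \<in> A" "y \<in> B" "x' \<in> subst_word \<theta> x" "y' \<in> subst_word \<theta> y"
    by (auto simp: subst_set_def conc_def)
  then have "w \<in> subst_word \<theta> (x @ y)" "x @ y \<in> conc A B"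
    by (auto simp: subst_word_append conc_def)
  then show "w \<in> subst_set \<theta> (conc A B)"
    unfolding subst_set_def by blast
qed

lemma subst_pow_word_append:
  "subst_pow_word \<theta> m (u @ v) = conc (subst_pow_word \<theta> m u) (subst_pow_word \<theta> m v)"
proof -
  have "(subst_set \<theta> ^^ m) (conc A B) = conc ((subst_set \<theta> ^^ m) A) ((subst_set \<theta> ^^ m) B)" for A B
    by (induction m) (auto simp: subst_set_conc)
  moreover have "{u @ v} = conc {u} {v}" by (auto simp: conc_def)
  ultimately show ?thesis by (simp add: subst_pow_word_def)
qed

lemma subst_pow_word_0 [simp]: "subst_pow_word \<theta> 0 u = {u}"
  by (simp add: subst_pow_word_def)

lemma funpow_subst_set: "(subst_set \<theta> ^^ m) S = (\<Union>u\<in>S. subst_pow_word \<theta> m u)"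
proof (induction m)
  case 0 then show ?case by simp
next
  case (Suc m)
  then show ?case by (simp add: subst_pow_word_def subst_set_def)
qed

lemma subst_pow_word_Suc: "subst_pow_word \<theta> (Suc m) u = (\<Union>v\<in>subst_word \<theta> u. subst_pow_word \<theta> m v)"
proof -
  have "subst_pow_word \<theta> (Suc m) u = (subst_set \<theta> ^^ m) (subst_set \<theta> {u})"
    unfolding subst_pow_word_def by (simp add: funpow_Suc_right del: funpow.simps)
  then show ?thesis by (simp add: funpow_subst_set subst_set_def)
qed

lemma subst_pow_word_Nil [simp]: "subst_pow_word \<theta> m [] = {[]}"
  by (induction m) (auto simp: subst_pow_word_Suc)

lemma subst_pow_Suc: "subst_pow \<theta> (Suc m) a = (\<Union>v\<in>\<theta> a. subst_pow_word \<theta> m v)"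
  by (simp add: subst_pow_def subst_pow_word_Suc)

lemma subst_matrix_nonneg: "0 \<le> subst_matrix \<theta> i j"
  by (simp add: subst_matrix_def)

lemma sum_count_list_Cons:
  fixes f :: "'a::finite \<Rightarrow> real"
  shows "(\<Sum>c\<in>UNIV. real (count_list (a # u) c) * f c) = f a + (\<Sum>c\<in>UNIV. real (count_list u c) * f c)"
proof -
  have "(\<Sum>c\<in>UNIV. real (count_list (a # u) c) * f c)
      = (\<Sum>c\<in>UNIV. (if c = a then f c else 0) + real (count_list u c) * f c)"
    by (rule sum.cong) (auto simp: algebra_simps)
  then show ?thesis by (simp add: sum.distrib)
qed

lemma length_eq_sum_count_list: "real (length w) = (\<Sum>b\<in>(UNIV::'a::finite set). real (count_list w b))"
  using sum_count_set[of w "UNIV::'a set"] by (simp flip: of_nat_sum)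

locale semi_compatible_subst =
  fixes \<theta> :: "'a::finite \<Rightarrow> 'a list set"
  assumes random: "random_subst \<theta>" and semi_compatible: "semi_compatible \<theta>"
begin

abbreviation M :: "'a \<Rightarrow> 'a \<Rightarrow> real" where "M \<equiv> subst_matrix \<theta>"

abbreviation Q :: "nat \<Rightarrow> 'a \<Rightarrow> real" where "Q \<equiv> qv \<theta>"

lemma finite_image: "finite (\<theta> a)"
  using random by (simp add: random_subst_def)

lemma image_nonempty: "\<theta> a \<noteq> {}"
  using random by (simp add: random_subst_def)

lemma Nil_notin_image: "[] \<notin> \<theta> a"
  using random by (auto simp: random_subst_def)

lemma count_list_image: "u \<in> \<theta> a \<Longrightarrow> real (count_list u b) = M b a"
proof -
  assume u: "u \<in> \<theta> a"
  have "(SOME u. u \<in> \<theta> a) \<in> \<theta> a" using image_nonempty by (simp add: some_in_eq)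
  with u semi_compatible show ?thesis unfolding semi_compatible_def subst_matrix_def by metis
qed

lemma column_sum_image: "u \<in> \<theta> a \<Longrightarrow> (\<Sum>b\<in>UNIV. M b a) = real (length u)"
  by (simp add: length_eq_sum_count_list count_list_image)

lemma column_sum_ge_1: "1 \<le> (\<Sum>b\<in>UNIV. M b a)"
proof -
  obtain u where u: "u \<in> \<theta> a" using image_nonempty by blast
  with Nil_notin_image have "1 \<le> length u" by (cases u) auto
  with column_sum_image[OF u] show ?thesis by simp
qed

lemma card_image_eq_1:
  assumes "(\<Sum>b\<in>UNIV. M b a) = 1"
  shows "card (\<theta> a) = 1"
proof -
  have length_1: "length u = 1" if "u \<in> \<theta> a" for u
    using column_sum_image[OF that] assms by simp
  obtain u where u: "u \<in> \<theta> a" using image_nonempty by blast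
  have "v = u" if v: "v \<in> \<theta> a" for v
  proof -
    obtain x y where xy: "u = [x]" "v = [y]"
      using length_1[OF u] length_1[OF v] by (auto simp: length_Suc_conv)
    have "count_list v x = count_list u x"
      using count_list_image[OF u, of x] count_list_image[OF v, of x] by simp
    with xy show "v = u" by (simp split: if_splits)
  qed
  with u have "\<theta> a = {u}" by blast
  then show ?thesis by simp
qed

lemma count_list_subst_word:
  "w \<in> subst_word \<theta> u \<Longrightarrow> real (count_list w b) = (\<Sum>c\<in>UNIV. real (count_list u c) * M b c)"
proof (induction u arbitrary: w)
  case Nil then show ?case by simp
next
  case (Cons a u)
  then obtain x y where "w = x @ y" "x \<in> \<theta> a" "y \<in> subst_word \<theta> u" by auto
  with Cons.IH count_list_image
  have "real (count_list w b) = M b a + (\<Sum>c\<in>UNIV. real (count_list u c) * M b c)" by simp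
  then show ?case by (simp only: sum_count_list_Cons)
qed

lemma count_list_subst_pow_word:
  "w \<in> subst_pow_word \<theta> m u \<Longrightarrow> real (count_list w b) = (\<Sum>c\<in>UNIV. real (count_list u c) * mat_pow M m b c)"
proof (induction m arbitrary: u w b)
  case 0 then show ?case by simp
next
  case (Suc m)
  then obtain v where v: "v \<in> subst_word \<theta> u" "w \<in> subst_pow_word \<theta> m v"
    by (auto simp: subst_pow_word_Suc)
  have "real (count_list w b) = (\<Sum>c\<in>UNIV. (\<Sum>d\<in>UNIV. real (count_list u d) * M c d) * mat_pow M m b c)"
    using Suc.IH[OF v(2)] count_list_subst_word[OF v(1)] by simp
  also have "\<dots> = (\<Sum>c\<in>UNIV. \<Sum>d\<in>UNIV. real (count_list u d) * (mat_pow M m b c * M c d))"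
    unfolding sum_distrib_right by (simp add: mult_ac)
  also have "\<dots> = (\<Sum>d\<in>UNIV. \<Sum>c\<in>UNIV. real (count_list u d) * (mat_pow M m b c * M c d))"
    by (rule sum.swap)
  also have "\<dots> = (\<Sum>d\<in>UNIV. real (count_list u d) * mat_pow M (Suc m) b d)"
    by (simp add: sum_distrib_left)
  finally show ?case .
qed

lemma length_subst_pow_word:
  "w \<in> subst_pow_word \<theta> m u \<Longrightarrow> real (length w) = (\<Sum>b\<in>UNIV. \<Sum>c\<in>UNIV. real (count_list u c) * mat_pow M m b c)"
  by (simp add: length_eq_sum_count_list count_list_subst_pow_word)

lemma length_eq_subst_pow_word:
  "x \<in> subst_pow_word \<theta> m u \<Longrightarrow> y \<in> subst_pow_word \<theta> m u \<Longrightarrow> length x = length y"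
  using length_subst_pow_word[of x m u] length_subst_pow_word[of y m u] by simp

lemma finite_nonempty_subst_word: "finite (subst_word \<theta> u) \<and> subst_word \<theta> u \<noteq> {}"
proof (induction u)
  case Nil then show ?case by simp
next
  case (Cons a u)
  obtain x y where "x \<in> \<theta> a" "y \<in> subst_word \<theta> u" using Cons image_nonempty by blast
  then have "x @ y \<in> conc (\<theta> a) (subst_word \<theta> u)" by (auto simp: conc_def)
  with Cons show ?case unfolding subst_word_Cons using finite_conc finite_image by blast
qed

lemma finite_nonempty_subst_pow_word: "finite (subst_pow_word \<theta> m u) \<and> subst_pow_word \<theta> m u \<noteq> {}"
  by (induction m arbitrary: u) (auto simp: subst_pow_word_Suc finite_nonempty_subst_word)

lemma card_subst_pow_word_pos: "0 < card (subst_pow_word \<theta> m u)"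
  using finite_nonempty_subst_pow_word by (simp add: card_gt_0_iff)

lemma ell_eq_column_sum: "real (ell \<theta> m a) = (\<Sum>b\<in>UNIV. mat_pow M m b a)"
proof -
  have "(SOME w. w \<in> subst_pow \<theta> m a) \<in> subst_pow_word \<theta> m [a]"
    using finite_nonempty_subst_pow_word[of m "[a]"] by (simp add: subst_pow_def some_in_eq)
  from length_subst_pow_word[OF this] show ?thesis
    by (simp add: ell_def sum_count_list_Cons del: count_list.simps)
qed

lemma ell_ge_1: "1 \<le> real (ell \<theta> m a)"
proof (induction m arbitrary: a)
  case 0 then show ?case by (simp add: ell_eq_column_sum)
next
  case (Suc m)
  have "(\<Sum>l\<in>UNIV. M l a) \<le> (\<Sum>l\<in>UNIV. real (ell \<theta> m l) * M l a)"
  proof (rule sum_mono)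
    fix l
    show "M l a \<le> real (ell \<theta> m l) * M l a"
      using mult_right_mono[OF Suc.IH[of l] subst_matrix_nonneg[of \<theta> l a]] by simp
  qed
  also have "\<dots> = (\<Sum>l\<in>UNIV. \<Sum>b\<in>UNIV. mat_pow M m b l * M l a)"
    by (simp add: ell_eq_column_sum sum_distrib_right)
  also have "\<dots> = (\<Sum>b\<in>UNIV. mat_pow M (Suc m) b a)"
    unfolding mat_pow.simps by (rule sum.swap)
  finally show ?case using column_sum_ge_1[of a] by (simp add: ell_eq_column_sum)
qed

text \<open>Semi-compatibility makes all words of \<open>\<theta>^m(u)\<close> equally long, so \<open>\<theta>^m\<close> of a concatenation
  is in bijection with the product of the factors' images.\<close>

lemma ln_card_subst_pow_word:
  "ln (real (card (subst_pow_word \<theta> m u))) = (\<Sum>c\<in>UNIV. real (count_list u c) * Q m c)"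
proof (induction u)
  case Nil then show ?case by simp
next
  case (Cons a u)
  have "card (conc (subst_pow_word \<theta> m [a]) (subst_pow_word \<theta> m u))
      = card (subst_pow_word \<theta> m [a]) * card (subst_pow_word \<theta> m u)"
    by (rule card_conc[OF _ _ length_eq_subst_pow_word]) (simp_all add: finite_nonempty_subst_pow_word)
  then have "card (subst_pow_word \<theta> m (a # u)) = card (subst_pow \<theta> m a) * card (subst_pow_word \<theta> m u)"
    using subst_pow_word_append[of \<theta> m "[a]" u] by (simp add: subst_pow_def)
  then have "ln (real (card (subst_pow_word \<theta> m (a # u)))) = Q m a + ln (real (card (subst_pow_word \<theta> m u)))"
    using card_subst_pow_word_pos[of m "[a]"] card_subst_pow_word_pos[of m u]
    by (simp add: ln_mult qv_def subst_pow_def)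
  then show ?case by (simp only: Cons sum_count_list_Cons)
qed

lemma qv_0: "Q 0 a = 0"
  by (simp add: qv_def subst_pow_def)

lemma card_subst_pow_word_image:
  assumes "v \<in> \<theta> a"
  shows "real (card (subst_pow_word \<theta> m v)) = exp (\<Sum>c\<in>UNIV. M c a * Q m c)"
proof -
  have "ln (real (card (subst_pow_word \<theta> m v))) = (\<Sum>c\<in>UNIV. M c a * Q m c)"
    by (simp add: ln_card_subst_pow_word count_list_image[OF assms])
  then show ?thesis using card_subst_pow_word_pos[of m v] by (metis exp_ln of_nat_0_less_iff)
qed

lemma qv_Suc_ge: "(\<Sum>c\<in>UNIV. M c a * Q m c) \<le> Q (Suc m) a"
proof -
  obtain v where v: "v \<in> \<theta> a" using image_nonempty by blast
  have "card (subst_pow_word \<theta> m v) \<le> card (subst_pow \<theta> (Suc m) a)"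
    unfolding subst_pow_Suc using v finite_image finite_nonempty_subst_pow_word
    by (intro card_mono) auto
  then have "exp (\<Sum>c\<in>UNIV. M c a * Q m c) \<le> real (card (subst_pow \<theta> (Suc m) a))"
    by (simp flip: card_subst_pow_word_image[OF v])
  moreover have "0 < card (subst_pow \<theta> (Suc m) a)"
    by (simp add: subst_pow_def card_subst_pow_word_pos)
  ultimately show ?thesis by (simp add: qv_def ln_ge_iff)
qed

lemma card_subst_pow_Suc_le:
  "real (card (subst_pow \<theta> (Suc m) a)) \<le> real (card (\<theta> a)) * exp (\<Sum>c\<in>UNIV. M c a * Q m c)"
proof -
  have "real (card (subst_pow \<theta> (Suc m) a)) \<le> (\<Sum>v\<in>\<theta> a. real (card (subst_pow_word \<theta> m v)))"
    unfolding subst_pow_Suc of_nat_sum[symmetric] of_nat_le_iff by (rule card_UN_le[OF finite_image])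
  then show ?thesis by (simp add: card_subst_pow_word_image)
qed

lemma card_subst_pow_Suc_disjoint:
  assumes "disjoint_set_condition \<theta>" "1 \<le> m"
  shows "real (card (subst_pow \<theta> (Suc m) a)) = real (card (\<theta> a)) * exp (\<Sum>c\<in>UNIV. M c a * Q m c)"
proof -
  have "real (card (subst_pow \<theta> (Suc m) a)) = (\<Sum>v\<in>\<theta> a. real (card (subst_pow_word \<theta> m v)))"
    unfolding subst_pow_Suc of_nat_sum[symmetric] of_nat_eq_iff
    using assms finite_nonempty_subst_pow_word unfolding disjoint_set_condition_def
    by (intro card_UN_disjoint finite_image) auto
  then show ?thesis by (simp add: card_subst_pow_word_image)
qed

lemma qv_1: "Q 1 a = ln (real (card (\<theta> a)))"
  using subst_pow_Suc[of \<theta> 0 a] by (simp add: qv_def)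

lemma card_image_pos: "0 < card (\<theta> a)"
  using finite_image image_nonempty by (simp add: card_gt_0_iff)

lemma qv_Suc_le: "Q (Suc m) a \<le> Q 1 a + (\<Sum>c\<in>UNIV. M c a * Q m c)"
proof -
  have "0 < card (subst_pow \<theta> (Suc m) a)"
    by (simp add: subst_pow_def card_subst_pow_word_pos)
  with card_subst_pow_Suc_le[of m a] card_image_pos[of a]
  have "Q (Suc m) a \<le> ln (real (card (\<theta> a)) * exp (\<Sum>c\<in>UNIV. M c a * Q m c))"
    unfolding qv_def by simp
  then show ?thesis using card_image_pos[of a] unfolding qv_1 by (simp add: ln_mult)
qed

lemma qv_Suc_disjoint:
  assumes "disjoint_set_condition \<theta>"
  shows "Q (Suc m) a = Q 1 a + (\<Sum>c\<in>UNIV. M c a * Q m c)"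
proof (cases "m = 0")
  case True then show ?thesis by (simp add: qv_0)
next
  case False
  then have "Q (Suc m) a = ln (real (card (\<theta> a))) + (\<Sum>c\<in>UNIV. M c a * Q m c)"
    using card_subst_pow_Suc_disjoint[OF assms, of m a] card_image_pos[of a]
    by (simp add: qv_def ln_mult)
  then show ?thesis unfolding qv_1 .
qed

lemma qv_Suc_identical:
  assumes "identical_set_condition \<theta>" "1 \<le> m"
  shows "Q (Suc m) a = (\<Sum>c\<in>UNIV. M c a * Q m c)"
proof -
  obtain v where v: "v \<in> \<theta> a" using image_nonempty by blast
  with assms have "subst_pow \<theta> (Suc m) a = subst_pow_word \<theta> m v"
    unfolding subst_pow_Suc identical_set_condition_def by blast
  then show ?thesis by (simp add: qv_def card_subst_pow_word_image[OF v])
qed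

lemma qv_add_ge: "(\<Sum>c\<in>UNIV. Q r c * mat_pow M t c a) \<le> Q (r + t) a"
proof (induction t arbitrary: a)
  case 0 then show ?case by simp
next
  case (Suc t)
  have "(\<Sum>c\<in>UNIV. Q r c * mat_pow M (Suc t) c a) = (\<Sum>c\<in>UNIV. M c a * (\<Sum>d\<in>UNIV. Q r d * mat_pow M t d c))"
    by (simp only: vec_mat_pow_Suc)
  also have "\<dots> \<le> (\<Sum>c\<in>UNIV. M c a * Q (r + t) c)"
    using Suc.IH subst_matrix_nonneg by (intro sum_mono mult_left_mono) auto
  also have "\<dots> \<le> Q (r + Suc t) a"
    using qv_Suc_ge by simp
  finally show ?case .
qed

lemma qv_Suc_identical_eq:
  assumes "identical_set_condition \<theta>"
  shows "Q (Suc t) a = (\<Sum>c\<in>UNIV. Q 1 c * mat_pow M t c a)"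
proof (induction t arbitrary: a)
  case 0 then show ?case by simp
next
  case (Suc t)
  have "(\<Sum>c\<in>UNIV. Q 1 c * mat_pow M (Suc t) c a) = (\<Sum>c\<in>UNIV. M c a * (\<Sum>d\<in>UNIV. Q 1 d * mat_pow M t d c))"
    by (simp only: vec_mat_pow_Suc)
  also have "\<dots> = Q (Suc (Suc t)) a"
    using qv_Suc_identical[OF assms, of "Suc t" a] by (simp add: Suc.IH)
  finally show ?case ..
qed

definition qv_upper :: "nat \<Rightarrow> 'a \<Rightarrow> real" where
  "qv_upper t a = (\<Sum>s<t. \<Sum>c\<in>UNIV. Q 1 c * mat_pow M s c a)"

lemma qv_upper_Suc: "qv_upper (Suc t) a = Q 1 a + (\<Sum>c\<in>UNIV. M c a * qv_upper t c)"
proof -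
  have "qv_upper (Suc t) a = Q 1 a + (\<Sum>s<t. \<Sum>c\<in>UNIV. Q 1 c * mat_pow M (Suc s) c a)"
    unfolding qv_upper_def sum.lessThan_Suc_shift by simp
  also have "(\<Sum>s<t. \<Sum>c\<in>UNIV. Q 1 c * mat_pow M (Suc s) c a)
      = (\<Sum>s<t. \<Sum>c\<in>UNIV. M c a * (\<Sum>d\<in>UNIV. Q 1 d * mat_pow M s d c))"
    by (simp only: vec_mat_pow_Suc)
  also have "\<dots> = (\<Sum>c\<in>UNIV. M c a * qv_upper t c)"
    unfolding qv_upper_def sum_distrib_left by (rule sum.swap)
  finally show ?thesis .
qed

lemma qv_le_upper: "Q t a \<le> qv_upper t a"
proof (induction t arbitrary: a)
  case 0 then show ?case by (simp add: qv_0 qv_upper_def)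
next
  case (Suc t)
  have "(\<Sum>c\<in>UNIV. M c a * Q t c) \<le> (\<Sum>c\<in>UNIV. M c a * qv_upper t c)"
    using Suc.IH subst_matrix_nonneg by (intro sum_mono mult_left_mono) auto
  then show ?case using qv_Suc_le[of t a] by (simp add: qv_upper_Suc)
qed

lemma qv_eq_upper_disjoint:
  assumes "disjoint_set_condition \<theta>"
  shows "Q t a = qv_upper t a"
proof (induction t arbitrary: a)
  case 0 then show ?case by (simp add: qv_0 qv_upper_def)
next
  case (Suc t)
  then show ?case unfolding qv_Suc_disjoint[OF assms] qv_upper_Suc by simp
qed

end

section \<open>Inflation word entropy\<close>

locale primitive_semi_compatible_subst =
  semi_compatible_subst \<theta> + perron_frobenius "subst_matrix \<theta>" lam R
  for \<theta> :: "'a::finite \<Rightarrow> 'a list set" and lam :: real and R :: "'a \<Rightarrow> real"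
begin

lemma eigenvalue_eq_column_sums: "lam = (\<Sum>j\<in>UNIV. (\<Sum>i\<in>UNIV. M i j) * R j)"
proof -
  have "lam = (\<Sum>i\<in>UNIV. \<Sum>j\<in>UNIV. M i j * R j)"
    by (simp add: R_eigen R_sum flip: sum_distrib_left)
  also have "\<dots> = (\<Sum>j\<in>UNIV. \<Sum>i\<in>UNIV. M i j * R j)"
    by (rule sum.swap)
  finally show ?thesis by (simp add: sum_distrib_right)
qed

lemma eigenvalue_ge_1: "1 \<le> lam"
proof -
  have "(\<Sum>j\<in>UNIV. R j) \<le> (\<Sum>j\<in>UNIV. (\<Sum>i\<in>UNIV. M i j) * R j)"
    using mult_right_mono[OF column_sum_ge_1 less_imp_le[OF R_pos]] by (intro sum_mono) simp
  then show ?thesis by (simp add: R_sum flip: eigenvalue_eq_column_sums)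
qed

text \<open>For \<open>lam = 1\<close> every column sum of \<open>M\<close> is 1, so \<open>\<theta>\<close> is deterministic and has zero entropy;
  then \<open>weighted_qv 1 / (lam - 1)\<close> is \<open>0 / 0 = 0\<close> in Isabelle, which is still the right value.\<close>

lemma qv_1_eq_0_if_eigenvalue_1:
  assumes "lam = 1"
  shows "Q 1 a = 0"
proof -
  have "(\<Sum>j\<in>UNIV. ((\<Sum>i\<in>UNIV. M i j) - 1) * R j) = 0"
    using eigenvalue_eq_column_sums assms R_sum by (simp add: left_diff_distrib sum_subtractf)
  moreover have "0 \<le> ((\<Sum>i\<in>UNIV. M i j) - 1) * R j" for j
    using column_sum_ge_1[of j] R_pos[of j] by simp
  ultimately have "((\<Sum>i\<in>UNIV. M i a) - 1) * R a = 0"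
    by (simp add: sum_nonneg_eq_0_iff)
  then have "card (\<theta> a) = 1" using R_pos[of a] by (intro card_image_eq_1) simp
  then show ?thesis unfolding qv_1 by simp
qed

definition weighted_qv :: "nat \<Rightarrow> real" where
  "weighted_qv r = (\<Sum>a\<in>UNIV. Q r a * R a)"

lemma weighted_qv_Suc_ge: "lam * weighted_qv r \<le> weighted_qv (Suc r)"
proof -
  have "lam * weighted_qv r = (\<Sum>c\<in>UNIV. Q r c * (lam * R c))"
    by (simp add: weighted_qv_def sum_distrib_left mult_ac)
  also have "\<dots> = (\<Sum>c\<in>UNIV. \<Sum>a\<in>UNIV. Q r c * (M c a * R a))"
    by (simp add: sum_distrib_left flip: R_eigen)
  also have "\<dots> = (\<Sum>a\<in>UNIV. (\<Sum>c\<in>UNIV. M c a * Q r c) * R a)"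
    by (subst sum.swap) (simp add: sum_distrib_left sum_distrib_right mult_ac)
  also have "\<dots> \<le> weighted_qv (Suc r)"
    unfolding weighted_qv_def using qv_Suc_ge R_pos
    by (intro sum_mono mult_right_mono) (auto intro: less_imp_le)
  finally show ?thesis .
qed

lemma weighted_qv_mono: "r \<le> s \<Longrightarrow> weighted_qv r / lam ^ r \<le> weighted_qv s / lam ^ s"
proof -
  have "weighted_qv n / lam ^ n \<le> weighted_qv (Suc n) / lam ^ Suc n" for n
    using weighted_qv_Suc_ge[of n] eigenvalue_pos by (simp add: field_simps)
  then have "mono (\<lambda>n. weighted_qv n / lam ^ n)" by (rule incseq_SucI)
  then show "r \<le> s \<Longrightarrow> weighted_qv r / lam ^ r \<le> weighted_qv s / lam ^ s" by (simp add: mono_def)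
qed

lemma column_and_ell_tendsto:
  obtains \<gamma> where "0 < \<gamma>"
    "\<And>v. (\<lambda>t. (\<Sum>c\<in>UNIV. v c * mat_pow M t c i) / lam ^ t) \<longlonglongrightarrow> \<gamma> * (\<Sum>c\<in>UNIV. v c * R c)"
    "(\<lambda>t. real (ell \<theta> t i) / lam ^ t) \<longlonglongrightarrow> \<gamma>"
proof -
  obtain \<gamma> where \<gamma>: "0 < \<gamma>"
    and lim: "\<And>v. (\<lambda>t. (\<Sum>c\<in>UNIV. v c * mat_pow M t c i) / lam ^ t) \<longlonglongrightarrow> \<gamma> * (\<Sum>c\<in>UNIV. v c * R c)"
    using mat_pow_column_tendsto[of i] by blast
  have "(\<lambda>t. real (ell \<theta> t i) / lam ^ t) \<longlonglongrightarrow> \<gamma>"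
    using lim[of "\<lambda>_. 1"] by (simp add: ell_eq_column_sum R_sum)
  from that[OF \<gamma> lim this] show ?thesis .
qed

lemma lower_bound_tendsto:
  "(\<lambda>t. (\<Sum>c\<in>UNIV. Q r c * mat_pow M t c i) / real (ell \<theta> (t + r) i)) \<longlonglongrightarrow> weighted_qv r / lam ^ r"
proof -
  obtain \<gamma> where \<gamma>: "0 < \<gamma>"
    and num: "\<And>v. (\<lambda>t. (\<Sum>c\<in>UNIV. v c * mat_pow M t c i) / lam ^ t) \<longlonglongrightarrow> \<gamma> * (\<Sum>c\<in>UNIV. v c * R c)"
    and den: "(\<lambda>t. real (ell \<theta> t i) / lam ^ t) \<longlonglongrightarrow> \<gamma>"
    using column_and_ell_tendsto[of i] by blast
  have "(\<lambda>t. (\<Sum>c\<in>UNIV. Q r c * mat_pow M t c i) / lam ^ (t + r)) \<longlonglongrightarrow> \<gamma> * weighted_qv r / lam ^ r"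
    using tendsto_divide[OF num[of "Q r"] tendsto_const[of "lam ^ r"]]
    by (simp add: power_add weighted_qv_def)
  moreover have "(\<lambda>t. real (ell \<theta> (t + r) i) / lam ^ (t + r)) \<longlonglongrightarrow> \<gamma>"
    using LIMSEQ_ignore_initial_segment[OF den] .
  ultimately have "(\<lambda>t. (\<Sum>c\<in>UNIV. Q r c * mat_pow M t c i) / real (ell \<theta> (t + r) i))
      \<longlonglongrightarrow> \<gamma> * weighted_qv r / lam ^ r / \<gamma>"
    by (rule tendsto_quotient_of_scaled) (use \<gamma> in auto)
  then show ?thesis using \<gamma> by simp
qed

lemma upper_bound_tendsto: "(\<lambda>m. qv_upper m i / real (ell \<theta> m i)) \<longlonglongrightarrow> weighted_qv 1 / (lam - 1)"
proof (cases "lam = 1")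
  case True
  then have "qv_upper m i = 0" for m
    unfolding qv_upper_def using qv_1_eq_0_if_eigenvalue_1 by simp
  with True show ?thesis by simp
next
  case False
  with eigenvalue_ge_1 have lam: "1 < lam" by simp
  obtain \<gamma> where \<gamma>: "0 < \<gamma>"
    and num: "\<And>v. (\<lambda>t. (\<Sum>c\<in>UNIV. v c * mat_pow M t c i) / lam ^ t) \<longlonglongrightarrow> \<gamma> * (\<Sum>c\<in>UNIV. v c * R c)"
    and den: "(\<lambda>t. real (ell \<theta> t i) / lam ^ t) \<longlonglongrightarrow> \<gamma>"
    using column_and_ell_tendsto[of i] by blast
  define z where "z s = (\<Sum>c\<in>UNIV. Q 1 c * mat_pow M s c i) / lam ^ s" for s
  have "z \<longlonglongrightarrow> \<gamma> * weighted_qv 1"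
    unfolding z_def[abs_def] weighted_qv_def by (rule num)
  moreover have "qv_upper m i = (\<Sum>s<m. z s * lam ^ s)" for m
    unfolding qv_upper_def z_def by simp
  ultimately have "(\<lambda>m. qv_upper m i / lam ^ m) \<longlonglongrightarrow> \<gamma> * weighted_qv 1 / (lam - 1)"
    using tendsto_geometric_average[OF _ lam] by simp
  then have "(\<lambda>m. qv_upper m i / real (ell \<theta> m i)) \<longlonglongrightarrow> \<gamma> * weighted_qv 1 / (lam - 1) / \<gamma>"
    by (rule tendsto_quotient_of_scaled[OF _ den]) (use \<gamma> in auto)
  then show ?thesis using \<gamma> by simp
qed

lemma lower_entropy_ge: "ereal (weighted_qv r / lam ^ r) \<le> lower_infl_entropy \<theta> i"
proof -
  let ?g = "\<lambda>m. (\<Sum>c\<in>UNIV. Q r c * mat_pow M (m - r) c i) / real (ell \<theta> m i)"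
  have "?g \<longlonglongrightarrow> weighted_qv r / lam ^ r"
    by (rule LIMSEQ_offset[of _ r]) (use lower_bound_tendsto[of r i] in simp)
  moreover have "eventually (\<lambda>m. ?g m \<le> Q m i / real (ell \<theta> m i)) sequentially"
    unfolding eventually_sequentially
  proof (intro exI allI impI)
    fix m assume "r \<le> m"
    then have "(\<Sum>c\<in>UNIV. Q r c * mat_pow M (m - r) c i) \<le> Q m i"
      using qv_add_ge[of r "m - r" i] by simp
    then show "?g m \<le> Q m i / real (ell \<theta> m i)"
      using ell_ge_1[of m i] by (simp add: divide_right_mono)
  qed
  ultimately show ?thesis
    unfolding lower_infl_entropy_def by (rule le_Liminf_of_tendsto)
qed

lemma upper_entropy_le: "upper_infl_entropy \<theta> i \<le> ereal (weighted_qv 1 / (lam - 1))"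
  unfolding upper_infl_entropy_def
proof (rule Limsup_le_of_tendsto[OF upper_bound_tendsto])
  show "eventually (\<lambda>m. Q m i / real (ell \<theta> m i) \<le> qv_upper m i / real (ell \<theta> m i)) sequentially"
    using qv_le_upper ell_ge_1 by (intro always_eventually allI divide_right_mono) auto
qed

lemma lower_entropy_identical:
  assumes "identical_set_condition \<theta>"
  shows "lower_infl_entropy \<theta> i = ereal (weighted_qv 1 / lam)"
proof -
  have "(\<lambda>t. Q (t + 1) i / real (ell \<theta> (t + 1) i)) \<longlonglongrightarrow> weighted_qv 1 / lam"
    using lower_bound_tendsto[of 1 i] unfolding qv_Suc_identical_eq[OF assms, symmetric] by simp
  then have "(\<lambda>m. ereal (Q m i / real (ell \<theta> m i))) \<longlonglongrightarrow> ereal (weighted_qv 1 / lam)"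
    by (rule tendsto_ereal[OF LIMSEQ_offset[of _ 1]])
  then show ?thesis
    unfolding lower_infl_entropy_def by (intro lim_imp_Liminf) simp_all
qed

lemma upper_entropy_disjoint:
  assumes "disjoint_set_condition \<theta>"
  shows "upper_infl_entropy \<theta> i = ereal (weighted_qv 1 / (lam - 1))"
  unfolding upper_infl_entropy_def qv_eq_upper_disjoint[OF assms]
  by (intro lim_imp_Limsup tendsto_ereal upper_bound_tendsto) simp

end

theorem mainTheorem3:
  fixes \<theta> :: "'a::finite \<Rightarrow> 'a list set" and lam :: real and R :: "'a \<Rightarrow> real"
  assumes "random_subst \<theta>"
    and "semi_compatible \<theta>"
    and "primitive_subst \<theta>"
    and "PF_right (subst_matrix \<theta>) lam R"
  shows "\<forall>i.
      ereal ((\<Sum>a\<in>UNIV. qv \<theta> 1 a * R a) / lam) \<le> lower_infl_entropy \<theta> i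
    \<and> lower_infl_entropy \<theta> i \<le> upper_infl_entropy \<theta> i
    \<and> upper_infl_entropy \<theta> i \<le> ereal ((\<Sum>a\<in>UNIV. qv \<theta> 1 a * R a) / (lam - 1))
    \<and> (identical_set_condition \<theta> \<longrightarrow>
         lower_infl_entropy \<theta> i = ereal ((\<Sum>a\<in>UNIV. qv \<theta> 1 a * R a) / lam))
    \<and> (disjoint_set_condition \<theta> \<longrightarrow>
         upper_infl_entropy \<theta> i = ereal ((\<Sum>a\<in>UNIV. qv \<theta> 1 a * R a) / (lam - 1)))
    \<and> (\<forall>r\<ge>1. ereal ((\<Sum>a\<in>UNIV. qv \<theta> r a * R a) / lam ^ r) \<le> lower_infl_entropy \<theta> i)
    \<and> (\<forall>r s. 1 \<le> r \<longrightarrow> r \<le> s \<longrightarrow>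
         (\<Sum>a\<in>UNIV. qv \<theta> r a * R a) / lam ^ r \<le> (\<Sum>a\<in>UNIV. qv \<theta> s a * R a) / lam ^ s)"
proof -
  interpret primitive_semi_compatible_subst \<theta> lam R
    by unfold_locales (use assms in \<open>simp_all add: primitive_subst_def\<close>)
  have "lower_infl_entropy \<theta> i \<le> upper_infl_entropy \<theta> i" for i
    unfolding lower_infl_entropy_def upper_infl_entropy_def by (rule Liminf_le_Limsup) simp
  then show ?thesis
    using lower_entropy_ge[of 1] upper_entropy_le lower_entropy_identical upper_entropy_disjoint
      lower_entropy_ge weighted_qv_mono
    unfolding weighted_qv_def by auto
qed

end
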